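(* Let \(\mathcal{I}\) be an instance of 3-SAT and let \(G(\mathcal{I})\) and \(T(\mathcal{I})\) be the graph and spanning tree constructed below. If \(\mathcal{I}\) admits a satisfying assignment, then \(T(\mathcal{I})\) is the \(\mathcal{F}\)-tree of some LBFS ordering of \(G(\mathcal{I})\).
   Context: Let \(\mathcal{I}\) have variables \(x_1,\dots,x_k\) and clauses \(C_1,\dots,C_l\), each a disjunction of three literals. \(G(\mathcal{I})\) has vertices: literal vertices \(X=\{x_1,\dots,x_k,\overline{x_1},\dots,\overline{x_k}\}\); for each clause \(C_i\) three vertices \(a_i,c_i,t_i\); and four vertices \(r,p,q,u\). Edges: any two vertices of \(X\) are adjacent except the pairs \(x_j\overline{x_j}\); each \(\{a_i,c_i,t_i\}\) is a triangle; \(c_i\) is adjacent to the literal vertices of the literals occurring in \(C_i\); \(r\) is adjacent to every vertex except \(u\) and the \(t_i\); \(u\) is adjacent to every vertex except \(r\) and the \(t_i\); \(p\) is adjacent to every vertex of \(X\) and to \(q\); \(q\) is adjacent to every vertex of \(X\) and to every \(a_i\); there are no other edges. \(T(\mathcal{I})\) is the spanning tree consisting of all edges of \(G(\mathcal{I})\) incident to \(r\), the edge \(up\), and the edges \(c_it_i\) for \(i=1,\dots,l\). An LBFS ordering (with \(n\) the number of vertices) is produced by starting with label \((n)\) on a start vertex, empty labels elsewhere, and for \(j=1,\dots,n\) picking an unnumbered vertex of lexicographically largest label as \(v_j\) and appending \(n-j\) to the labels of its unnumbered neighbors (ties arbitrary). The \(\mathcal{F}\)-tree of an ordering \((v_1,\dots,v_n)\)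 has, for each \(v\ne v_1\), an edge from \(v\) to its leftmost neighbor in the ordering. *)

theory Defs
  imports Main
begin

(* A 3-SAT instance: k variables (indexed 0..<k), a list of clauses, each a list
   of three literals.  A literal is (j, b): b = True means x_j, b = False means
   the negation of x_j. *)
type_synonym literal = "nat \<times> bool"

definition sat3_instance :: "nat \<Rightarrow> literal list list \<Rightarrow> bool" where
  "sat3_instance k cls \<longleftrightarrow>
     (\<forall>c \<in> set cls. length c = 3 \<and> (\<forall>(j, b) \<in> set c. j < k))"

definition satisfies :: "(nat \<Rightarrow> bool) \<Rightarrow> literal list list \<Rightarrow> bool" where
  "satisfies \<sigma> cls \<longleftrightarrow> (\<forall>c \<in> set cls. \<exists>(j, b) \<in> set c. \<sigma> j = b)"

definition satisfiable :: "nat \<Rightarrow> literal list list \<Rightarrow> bool" where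
  "satisfiable k cls \<longleftrightarrow> (\<exists>\<sigma>. satisfies \<sigma> cls)"

datatype vert = Lit nat bool | Av nat | Cv nat | Tv nat | Rv | Pv | Qv | Uv

definition G_verts :: "nat \<Rightarrow> literal list list \<Rightarrow> vert set" where
  "G_verts k cls =
     {Lit j b | j b. j < k} \<union> {Av i | i. i < length cls} \<union> {Cv i | i. i < length cls}
     \<union> {Tv i | i. i < length cls} \<union> {Rv, Pv, Qv, Uv}"

definition is_T :: "vert \<Rightarrow> bool" where
  "is_T v \<longleftrightarrow> (\<exists>i. v = Tv i)"

definition is_X :: "vert \<Rightarrow> bool" where
  "is_X v \<longleftrightarrow> (\<exists>j b. v = Lit j b)"

definition G_edge0 :: "literal list list \<Rightarrow> vert \<Rightarrow> vert \<Rightarrow> bool" where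
  "G_edge0 cls v w \<longleftrightarrow>
     (\<exists>j b j' b'. v = Lit j b \<and> w = Lit j' b' \<and> j \<noteq> j')
   \<or> (\<exists>i. (v = Av i \<and> w = Cv i) \<or> (v = Av i \<and> w = Tv i) \<or> (v = Cv i \<and> w = Tv i))
   \<or> (\<exists>i j b. i < length cls \<and> (j, b) \<in> set (cls ! i) \<and> v = Cv i \<and> w = Lit j b)
   \<or> (v = Rv \<and> w \<noteq> Uv \<and> \<not> is_T w)
   \<or> (v = Uv \<and> w \<noteq> Rv \<and> \<not> is_T w)
   \<or> (v = Pv \<and> (is_X w \<or> w = Qv))
   \<or> (v = Qv \<and> (is_X w \<or> (\<exists>i. w = Av i)))"

definition G_adj :: "nat \<Rightarrow> literal list list \<Rightarrow> vert \<Rightarrow> vert \<Rightarrow> bool" where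
  "G_adj k cls v w \<longleftrightarrow>
     v \<in> G_verts k cls \<and> w \<in> G_verts k cls \<and> v \<noteq> w \<and> (G_edge0 cls v w \<or> G_edge0 cls w v)"

definition T_edges :: "nat \<Rightarrow> literal list list \<Rightarrow> vert set set" where
  "T_edges k cls =
     {{Rv, v} | v. G_adj k cls Rv v} \<union> {{Uv, Pv}} \<union> {{Cv i, Tv i} | i. i < length cls}"

(* Lexicographic order on labels (a proper prefix is smaller) *)
definition lex_less :: "nat list \<Rightarrow> nat list \<Rightarrow> bool" where
  "lex_less xs ys \<longleftrightarrow> (xs, ys) \<in> lexord {(a, b). a < b}"

(* Label of vertex w after the first j vertices vs!0, ..., vs!(j-1) have been
   numbered, with start vertex s and n = length vs.  Numbering the vertex at
   (1-based) step i+1 appends n - (i+1) to the labels of its neighbours. *)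
definition lbfs_label ::
  "('v \<Rightarrow> 'v \<Rightarrow> bool) \<Rightarrow> 'v \<Rightarrow> 'v list \<Rightarrow> nat \<Rightarrow> 'v \<Rightarrow> nat list" where
  "lbfs_label adj s vs j w =
     (if w = s then [length vs] else []) @
     map (\<lambda>i. length vs - (i + 1)) (filter (\<lambda>i. adj (vs ! i) w) [0..<j])"

definition is_lbfs :: "'v set \<Rightarrow> ('v \<Rightarrow> 'v \<Rightarrow> bool) \<Rightarrow> 'v list \<Rightarrow> bool" where
  "is_lbfs V adj vs \<longleftrightarrow>
     distinct vs \<and> set vs = V \<and>
     (\<exists>s \<in> V. \<forall>j < length vs. \<forall>w \<in> V - set (take j vs).
        \<not> lex_less (lbfs_label adj s vs j (vs ! j)) (lbfs_label adj s vs j w))"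

definition F_tree :: "('v \<Rightarrow> 'v \<Rightarrow> bool) \<Rightarrow> 'v list \<Rightarrow> 'v set set" where
  "F_tree adj vs =
     {{vs ! j, vs ! (LEAST i. i < length vs \<and> adj (vs ! i) (vs ! j))} | j. 0 < j \<and> j < length vs}"

end

(*
  Fix a satisfying assignment and take the ordering r, p, the true literals, q, the false
  literals (in reverse variable order), then the c_i, the a_i in the same clause order, u,
  and the t_i in that order again, where clauses are sorted by decreasing LBFS label of c_i
  after the literal block. An ordering is an LBFS ordering as soon as it satisfies the
  four-point condition: if x < v < w, xw is an edge and xv is not, then some y < x is
  adjacent to v but not to w. Here a witness is r in most cases; for v = c_i and w = a_i'
  it is a true literal of C_i (this is where satisfiability enters), and for v = c_i,
  w = c_i' it comes from the clause order. Finally, every vertex but u and the t_i is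
  adjacent to r, the leftmost neighbour of u is p and that of t_i is c_i, so the F-tree
  is T.
*)
theory Submission
  imports Defs "HOL-Library.List_Lexorder"
begin

lemma lex_less_simps [simp]:
  "lex_less [] ys \<longleftrightarrow> ys \<noteq> []"
  "\<not> lex_less xs []"
  "lex_less (a # xs) (b # ys) \<longleftrightarrow> a < b \<or> a = b \<and> lex_less xs ys"
  unfolding lex_less_def by (auto simp: neq_Nil_conv)

lemma lex_less_irrefl: "\<not> lex_less xs xs"
  unfolding lex_less_def by (rule lexord_irreflexive) simp

lemma lex_less_map_filter:
  assumes "sorted_wrt (\<lambda>a b. f b < f a) xs"
  shows "lex_less (map f (filter P xs)) (map f (filter Q xs)) \<longleftrightarrow>
    (\<exists>d < length xs. Q (xs ! d) \<and> \<not> P (xs ! d) \<and> (\<forall>i<d. P (xs ! i) = Q (xs ! i)))"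
  using assms
proof (induction xs)
  case Nil
  then show ?case by simp
next
  case (Cons x xs)
  have smaller: "\<forall>z\<in>set (map f (filter R xs)). z < f x" for R
    using Cons.prems by auto
  have IH: "lex_less (map f (filter P xs)) (map f (filter Q xs)) \<longleftrightarrow>
      (\<exists>d < length xs. Q (xs ! d) \<and> \<not> P (xs ! d) \<and> (\<forall>i<d. P (xs ! i) = Q (xs ! i)))"
    using Cons by simp
  have "\<not> lex_less (f x # ys) zs" if "\<forall>z\<in>set zs. z < f x" for ys zs
    using that by (cases zs) auto
  moreover have "lex_less ys (f x # zs)" if "\<forall>z\<in>set ys. z < f x" for ys zs
    using that by (cases ys) auto
  ultimately show ?case
    using IH smaller by (cases "P x"; cases "Q x") (auto simp: Ex_less_Suc2 All_less_Suc2)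
qed

corollary lex_less_map_filter_upt:
  assumes "\<And>a b. a < b \<Longrightarrow> b < j \<Longrightarrow> f b < f a"
  shows "lex_less (map f (filter P [0..<j])) (map f (filter Q [0..<j])) \<longleftrightarrow>
    (\<exists>d<j. Q d \<and> \<not> P d \<and> (\<forall>i<d. P i = Q i))"
  using assms by (subst lex_less_map_filter) (auto simp: sorted_wrt_iff_nth_less)

lemma earlier_difference_if_not_lex_less:
  assumes "\<not> lex_less (map f (filter P [0..<j])) (map f (filter Q [0..<j]))"
    and "\<And>a b. a < b \<Longrightarrow> b < j \<Longrightarrow> f b < f a"
    and "d < j" "Q d" "\<not> P d"
  shows "\<exists>d'<d. P d' \<and> \<not> Q d'"
proof -
  define d0 where "d0 = (LEAST i. P i \<noteq> Q i)"
  have differ: "P d \<noteq> Q d" using assms(4,5) by simp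
  have "d0 \<le> d" unfolding d0_def by (rule Least_le) (rule differ)
  have "P d0 \<noteq> Q d0" unfolding d0_def by (rule LeastI) (rule differ)
  have agree: "\<forall>i<d0. P i = Q i" unfolding d0_def using not_less_Least by blast
  have "\<not> (Q d0 \<and> \<not> P d0)"
  proof
    assume "Q d0 \<and> \<not> P d0"
    with agree \<open>d0 \<le> d\<close> assms(3) have "\<exists>d<j. Q d \<and> \<not> P d \<and> (\<forall>i<d. P i = Q i)"
      by (intro exI[of _ d0]) auto
    with assms(1) show False
      by (simp add: lex_less_map_filter_upt[OF assms(2)])
  qed
  with \<open>P d0 \<noteq> Q d0\<close> \<open>d0 \<le> d\<close> assms(4,5) show ?thesis
    by (metis le_neq_implies_less)
qed

lemma lbfs_label_not_start:
  "w \<noteq> s \<Longrightarrow> lbfs_label adj s vs j w = map (\<lambda>i. length vs - (i + 1)) (filter (\<lambda>i. adj (vs ! i) w) [0..<j])"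
  by (simp add: lbfs_label_def)

theorem is_lbfs_if_four_point:
  assumes "distinct vs" "set vs = V" "vs \<noteq> []"
    and four_point: "\<And>a b c. a < b \<Longrightarrow> b < c \<Longrightarrow> c < length vs \<Longrightarrow>
      adj (vs ! a) (vs ! c) \<Longrightarrow> \<not> adj (vs ! a) (vs ! b) \<Longrightarrow>
      \<exists>d<a. adj (vs ! d) (vs ! b) \<and> \<not> adj (vs ! d) (vs ! c)"
  shows "is_lbfs V adj vs"
  unfolding is_lbfs_def
proof (intro conjI bexI[of _ "vs ! 0"] allI impI ballI)
  fix j w assume j: "j < length vs" and w: "w \<in> V - set (take j vs)"
  obtain c where c: "c < length vs" "w = vs ! c"
    using w assms(2) by (auto simp: in_set_conv_nth)
  have "j \<le> c"
    using w c by (metis DiffD2 in_set_conv_nth length_take min_less_iff_conj not_le nth_take)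
  show "\<not> lex_less (lbfs_label adj (vs ! 0) vs j (vs ! j)) (lbfs_label adj (vs ! 0) vs j w)"
  proof (cases "c = j")
    case True
    then show ?thesis using c lex_less_irrefl by simp
  next
    case False
    with \<open>j \<le> c\<close> have "j < c" by simp
    have distinct_start: "vs ! i \<noteq> vs ! 0" if "0 < i" "i < length vs" for i
      using that assms(1) nth_eq_iff_index_eq by fastforce
    show ?thesis
    proof (cases "j = 0")
      case True
      then show ?thesis
        using c \<open>j < c\<close> distinct_start by (simp add: lbfs_label_def)
    next
      case False
      let ?P = "\<lambda>i. adj (vs ! i) (vs ! j)" and ?Q = "\<lambda>i. adj (vs ! i) (vs ! c)"
      have "\<not> (\<exists>d<j. ?Q d \<and> \<not> ?P d \<and> (\<forall>i<d. ?P i = ?Q i))"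
        using four_point \<open>j < c\<close> c(1) by metis
      then show ?thesis
        using False \<open>j < c\<close> c j distinct_start
        by (simp add: lbfs_label_not_start lex_less_map_filter_upt)
    qed
  qed
qed (use assms in auto)

lemma F_tree_eq_parent_edges:
  assumes "\<And>j. 0 < j \<Longrightarrow> j < length vs \<Longrightarrow>
    \<exists>i<length vs. vs ! i = par (vs ! j) \<and> adj (vs ! i) (vs ! j) \<and> (\<forall>i'<i. \<not> adj (vs ! i') (vs ! j))"
  shows "F_tree adj vs = (\<lambda>j. {vs ! j, par (vs ! j)}) ` {0<..<length vs}"
proof -
  have leftmost: "vs ! (LEAST i. i < length vs \<and> adj (vs ! i) (vs ! j)) = par (vs ! j)"
    if j: "0 < j" "j < length vs" for j
  proof -
    obtain i where i: "i < length vs" "vs ! i = par (vs ! j)" "adj (vs ! i) (vs ! j)"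
      "\<forall>i'<i. \<not> adj (vs ! i') (vs ! j)"
      using assms[OF j] by blast
    have "(LEAST i. i < length vs \<and> adj (vs ! i) (vs ! j)) = i"
      using i by (intro Least_equality) (auto simp: not_less[symmetric])
    with i show ?thesis by simp
  qed
  have "{j. 0 < j \<and> j < length vs} = {0<..<length vs}" by auto
  then show ?thesis
    unfolding F_tree_def setcompr_eq_image using leftmost by (intro image_cong) auto
qed

lemma G_verts_simps [simp]:
  "Lit j b \<in> G_verts k cls \<longleftrightarrow> j < k"
  "Av i \<in> G_verts k cls \<longleftrightarrow> i < length cls"
  "Cv i \<in> G_verts k cls \<longleftrightarrow> i < length cls"
  "Tv i \<in> G_verts k cls \<longleftrightarrow> i < length cls"
  "Rv \<in> G_verts k cls" "Pv \<in> G_verts k cls" "Qv \<in> G_verts k cls" "Uv \<in> G_verts k cls"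
  by (auto simp: G_verts_def)

lemma G_adj_simps [simp]:
  "G_adj k cls (Lit j b) (Lit j' b') \<longleftrightarrow> j < k \<and> j' < k \<and> j \<noteq> j'"
  "G_adj k cls (Lit j b) (Av i') \<longleftrightarrow> False"
  "G_adj k cls (Lit j b) (Cv i') \<longleftrightarrow> j < k \<and> i' < length cls \<and> (j, b) \<in> set (cls ! i')"
  "G_adj k cls (Lit j b) (Tv i') \<longleftrightarrow> False"
  "G_adj k cls (Lit j b) Rv \<longleftrightarrow> j < k"
  "G_adj k cls (Lit j b) Pv \<longleftrightarrow> j < k"
  "G_adj k cls (Lit j b) Qv \<longleftrightarrow> j < k"
  "G_adj k cls (Lit j b) Uv \<longleftrightarrow> j < k"
  "G_adj k cls (Av i) (Lit j' b') \<longleftrightarrow> False"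
  "G_adj k cls (Av i) (Av i') \<longleftrightarrow> False"
  "G_adj k cls (Av i) (Cv i') \<longleftrightarrow> i < length cls \<and> i = i'"
  "G_adj k cls (Av i) (Tv i') \<longleftrightarrow> i < length cls \<and> i = i'"
  "G_adj k cls (Av i) Rv \<longleftrightarrow> i < length cls"
  "G_adj k cls (Av i) Pv \<longleftrightarrow> False"
  "G_adj k cls (Av i) Qv \<longleftrightarrow> i < length cls"
  "G_adj k cls (Av i) Uv \<longleftrightarrow> i < length cls"
  "G_adj k cls (Cv i) (Lit j' b') \<longleftrightarrow> j' < k \<and> i < length cls \<and> (j', b') \<in> set (cls ! i)"
  "G_adj k cls (Cv i) (Av i') \<longleftrightarrow> i' < length cls \<and> i' = i"
  "G_adj k cls (Cv i) (Cv i') \<longleftrightarrow> False"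
  "G_adj k cls (Cv i) (Tv i') \<longleftrightarrow> i < length cls \<and> i = i'"
  "G_adj k cls (Cv i) Rv \<longleftrightarrow> i < length cls"
  "G_adj k cls (Cv i) Pv \<longleftrightarrow> False"
  "G_adj k cls (Cv i) Qv \<longleftrightarrow> False"
  "G_adj k cls (Cv i) Uv \<longleftrightarrow> i < length cls"
  "G_adj k cls (Tv i) (Lit j' b') \<longleftrightarrow> False"
  "G_adj k cls (Tv i) (Av i') \<longleftrightarrow> i' < length cls \<and> i' = i"
  "G_adj k cls (Tv i) (Cv i') \<longleftrightarrow> i' < length cls \<and> i' = i"
  "G_adj k cls (Tv i) (Tv i') \<longleftrightarrow> False"
  "G_adj k cls (Tv i) Rv \<longleftrightarrow> False"
  "G_adj k cls (Tv i) Pv \<longleftrightarrow> False"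
  "G_adj k cls (Tv i) Qv \<longleftrightarrow> False"
  "G_adj k cls (Tv i) Uv \<longleftrightarrow> False"
  "G_adj k cls Rv (Lit j' b') \<longleftrightarrow> j' < k"
  "G_adj k cls Rv (Av i') \<longleftrightarrow> i' < length cls"
  "G_adj k cls Rv (Cv i') \<longleftrightarrow> i' < length cls"
  "G_adj k cls Rv (Tv i') \<longleftrightarrow> False"
  "G_adj k cls Rv Rv \<longleftrightarrow> False"
  "G_adj k cls Rv Pv \<longleftrightarrow> True"
  "G_adj k cls Rv Qv \<longleftrightarrow> True"
  "G_adj k cls Rv Uv \<longleftrightarrow> False"
  "G_adj k cls Pv (Lit j' b') \<longleftrightarrow> j' < k"
  "G_adj k cls Pv (Av i') \<longleftrightarrow> False"
  "G_adj k cls Pv (Cv i') \<longleftrightarrow> False"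
  "G_adj k cls Pv (Tv i') \<longleftrightarrow> False"
  "G_adj k cls Pv Rv \<longleftrightarrow> True"
  "G_adj k cls Pv Pv \<longleftrightarrow> False"
  "G_adj k cls Pv Qv \<longleftrightarrow> True"
  "G_adj k cls Pv Uv \<longleftrightarrow> True"
  "G_adj k cls Qv (Lit j' b') \<longleftrightarrow> j' < k"
  "G_adj k cls Qv (Av i') \<longleftrightarrow> i' < length cls"
  "G_adj k cls Qv (Cv i') \<longleftrightarrow> False"
  "G_adj k cls Qv (Tv i') \<longleftrightarrow> False"
  "G_adj k cls Qv Rv \<longleftrightarrow> True"
  "G_adj k cls Qv Pv \<longleftrightarrow> True"
  "G_adj k cls Qv Qv \<longleftrightarrow> False"
  "G_adj k cls Qv Uv \<longleftrightarrow> True"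
  "G_adj k cls Uv (Lit j' b') \<longleftrightarrow> j' < k"
  "G_adj k cls Uv (Av i') \<longleftrightarrow> i' < length cls"
  "G_adj k cls Uv (Cv i') \<longleftrightarrow> i' < length cls"
  "G_adj k cls Uv (Tv i') \<longleftrightarrow> False"
  "G_adj k cls Uv Rv \<longleftrightarrow> False"
  "G_adj k cls Uv Pv \<longleftrightarrow> True"
  "G_adj k cls Uv Qv \<longleftrightarrow> True"
  "G_adj k cls Uv Uv \<longleftrightarrow> False"
  by (auto simp: G_adj_def G_edge0_def is_T_def is_X_def)

fun tree_parent :: "vert \<Rightarrow> vert" where
  "tree_parent (Tv i) = Cv i"
| "tree_parent Uv = Pv"
| "tree_parent _ = Rv"

lemma image_tree_parent_edges:
  "(\<lambda>v. {v, tree_parent v}) ` (G_verts k cls - {Rv}) = T_edges k cls"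
proof (intro equalityI subsetI)
  fix e assume "e \<in> (\<lambda>v. {v, tree_parent v}) ` (G_verts k cls - {Rv})"
  then obtain v where "e = {v, tree_parent v}" "v \<in> G_verts k cls" "v \<noteq> Rv" by blast
  then show "e \<in> T_edges k cls"
    unfolding T_edges_def by (cases v) (auto simp: insert_commute)
next
  have "{Rv, v} \<in> (\<lambda>v. {v, tree_parent v}) ` (G_verts k cls - {Rv})" if "G_adj k cls Rv v" for v
  proof (rule image_eqI)
    from that show "v \<in> G_verts k cls - {Rv}" by (auto simp: G_adj_def)
    from that show "{Rv, v} = {v, tree_parent v}" by (cases v) auto
  qed
  moreover have "{Cv i, Tv i} \<in> (\<lambda>v. {v, tree_parent v}) ` (G_verts k cls - {Rv})"
    if "i < length cls" for i
    using that by (intro image_eqI[of _ _ "Tv i"]) (auto simp: insert_commute)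
  moreover have "{Uv, Pv} \<in> (\<lambda>v. {v, tree_parent v}) ` (G_verts k cls - {Rv})"
    by (intro image_eqI[of _ _ Uv]) auto
  ultimately show "e \<in> (\<lambda>v. {v, tree_parent v}) ` (G_verts k cls - {Rv})"
    if "e \<in> T_edges k cls" for e
    using that unfolding T_edges_def by blast
qed

locale satisfied_instance =
  fixes k :: nat and cls :: "literal list list" and \<sigma> :: "nat \<Rightarrow> bool"
  assumes well_formed: "sat3_instance k cls" and satisfied: "satisfies \<sigma> cls"
begin

abbreviation "l \<equiv> length cls"
abbreviation "V \<equiv> G_verts k cls"
abbreviation "adj \<equiv> G_adj k cls"

lemma clause_has_true_literal:
  assumes "i < l"
  shows "\<exists>j<k. adj (Lit j (\<sigma> j)) (Cv i)"
proof -
  have "cls ! i \<in> set cls" using assms by simp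
  then obtain j where "(j, \<sigma> j) \<in> set (cls ! i)"
    using satisfied unfolding satisfies_def by fastforce
  moreover have "j < k"
    using well_formed \<open>cls ! i \<in> set cls\<close> calculation unfolding sat3_instance_def by blast
  ultimately show ?thesis using assms by auto
qed

definition prefix :: "vert list" where
  "prefix = [Rv, Pv] @ map (\<lambda>j. Lit j (\<sigma> j)) [0..<k] @ [Qv] @ map (\<lambda>j. Lit j (\<not> \<sigma> j)) (rev [0..<k])"

lemma length_prefix [simp]: "length prefix = 3 + 2 * k"
  by (simp add: prefix_def)

definition clause_key :: "nat \<Rightarrow> nat list" where
  "clause_key i = lbfs_label adj Rv prefix (length prefix) (Cv i)"

(* The c_i follow the prefix and are pairwise non-adjacent, so LBFS numbers them in decreasing
   order of the label they receive from the prefix. *)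
definition clause_order :: "nat list" where
  "clause_order = rev (sort_key clause_key [0..<l])"

lemma distinct_clause_order: "distinct clause_order"
  by (simp add: clause_order_def)

lemma set_clause_order: "set clause_order = {0..<l}"
  by (simp add: clause_order_def)

lemma length_clause_order [simp]: "length clause_order = l"
  by (simp add: clause_order_def)

lemma clause_order_key_antimono:
  assumes "e < e'" "e' < l"
  shows "\<not> lex_less (clause_key (clause_order ! e)) (clause_key (clause_order ! e'))"
proof -
  let ?sorted = "sort_key clause_key [0..<l]"
  have "sorted (map clause_key ?sorted)"
    by (rule sorted_sort_key)
  then have "clause_key (?sorted ! (l - Suc e')) \<le> clause_key (?sorted ! (l - Suc e))"
    using assms by (auto simp: sorted_iff_nth_mono)
  then have "\<not> clause_key (?sorted ! (l - Suc e)) < clause_key (?sorted ! (l - Suc e'))"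
    by (simp add: not_less)
  then show ?thesis
    using assms by (simp add: clause_order_def rev_nth lex_less_def list_less_def)
qed

definition clause_rank :: "nat \<Rightarrow> nat" where
  "clause_rank i = (THE e. e < l \<and> clause_order ! e = i)"

lemma clause_rank:
  assumes "i < l"
  shows "clause_rank i < l" "clause_order ! clause_rank i = i"
  using theI'[OF distinct_Ex1[OF distinct_clause_order, of i]] assms set_clause_order
  unfolding clause_rank_def by auto

lemma earlier_literal_if_earlier_clause:
  assumes "i < l" "i' < l" "clause_rank i < clause_rank i'" "d < length prefix"
    and "adj (prefix ! d) (Cv i')" "\<not> adj (prefix ! d) (Cv i)"
  shows "\<exists>d'<d. adj (prefix ! d') (Cv i) \<and> \<not> adj (prefix ! d') (Cv i')"
proof -
  have "\<not> lex_less (clause_key i) (clause_key i')"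
    using clause_order_key_antimono[of "clause_rank i" "clause_rank i'"] assms(1-3) clause_rank
    by simp
  then have "\<not> lex_less
      (map (\<lambda>d. length prefix - (d + 1)) (filter (\<lambda>d. adj (prefix ! d) (Cv i)) [0..<length prefix]))
      (map (\<lambda>d. length prefix - (d + 1)) (filter (\<lambda>d. adj (prefix ! d) (Cv i')) [0..<length prefix]))"
    by (simp add: clause_key_def lbfs_label_def)
  then show ?thesis
    by (rule earlier_difference_if_not_lex_less) (use assms(4-6) in auto)
qed

definition vs :: "vert list" where
  "vs = prefix @ map Cv clause_order @ map Av clause_order @ Uv # map Tv clause_order"

definition pos :: "vert \<Rightarrow> nat" where
  "pos v = (case v of
      Rv \<Rightarrow> 0
    | Pv \<Rightarrow> 1
    | Lit j b \<Rightarrow> if b = \<sigma> j then 2 + j else 2 + 2 * k - j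
    | Qv \<Rightarrow> 2 + k
    | Cv i \<Rightarrow> 3 + 2 * k + clause_rank i
    | Av i \<Rightarrow> 3 + 2 * k + l + clause_rank i
    | Uv \<Rightarrow> 3 + 2 * k + 2 * l
    | Tv i \<Rightarrow> 4 + 2 * k + 2 * l + clause_rank i)"

lemma length_vs: "length vs = 4 + 2 * k + 3 * l"
  by (simp add: vs_def)

lemma distinct_vs: "distinct vs"
proof -
  have "distinct prefix"
    by (auto simp: prefix_def distinct_map inj_on_def)
  then show ?thesis
    using distinct_clause_order by (auto simp: vs_def distinct_map inj_on_def prefix_def)
qed

lemma set_prefix: "set prefix = {Rv, Pv, Qv} \<union> {Lit j b | j b. j < k}"
proof -
  have "Lit j b \<in> set prefix" if "j < k" for j b
    using that by (cases "b = \<sigma> j") (auto simp: prefix_def)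
  then show ?thesis by (auto simp: prefix_def)
qed

lemma set_vs: "set vs = V"
  using set_clause_order by (auto simp: vs_def set_prefix G_verts_def)

lemma nth_vs_prefix: "d < length prefix \<Longrightarrow> vs ! d = prefix ! d"
  by (simp add: vs_def nth_append)

lemma nth_vs_clauses:
  "vs ! (3 + 2 * k + e) = (map Cv clause_order @ map Av clause_order @ Uv # map Tv clause_order) ! e"
  by (simp add: vs_def nth_append)

lemma nth_pos:
  assumes "v \<in> V"
  shows "pos v < length vs \<and> vs ! pos v = v"
proof (cases v)
  case (Lit j b)
  with assms have "j < k" by simp
  show ?thesis
  proof (cases "b = \<sigma> j")
    case True
    with Lit \<open>j < k\<close> show ?thesis
      by (simp add: pos_def length_vs nth_vs_prefix) (simp add: prefix_def nth_append)
  next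
    case False
    have "2 + 2 * k - j = 3 + k + (k - 1 - j)"
      using \<open>j < k\<close> by simp
    moreover have "prefix ! (3 + k + (k - 1 - j)) = Lit j (\<not> \<sigma> j)"
      using \<open>j < k\<close> by (auto simp: prefix_def nth_append rev_nth)
    ultimately show ?thesis
      using Lit False \<open>j < k\<close> by (simp add: pos_def length_vs nth_vs_prefix)
  qed
next
  case (Cv i)
  with assms show ?thesis
    using clause_rank[of i] nth_vs_clauses[of "clause_rank i"]
    by (simp add: pos_def length_vs nth_append)
next
  case (Av i)
  with assms show ?thesis
    using clause_rank[of i] nth_vs_clauses[of "l + clause_rank i"]
    by (simp add: pos_def length_vs nth_append algebra_simps)
next
  case (Tv i)
  with assms show ?thesis
    using clause_rank[of i] nth_vs_clauses[of "2 * l + 1 + clause_rank i"]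
    by (simp add: pos_def length_vs nth_append algebra_simps)
next
  case Uv
  then show ?thesis
    using nth_vs_clauses[of "2 * l"] by (simp add: pos_def length_vs nth_append algebra_simps)
qed (simp_all add: pos_def length_vs nth_vs_prefix, simp_all add: prefix_def nth_append)

lemma pos_nth:
  assumes "d < length vs"
  shows "vs ! d \<in> V \<and> pos (vs ! d) = d"
proof -
  have "vs ! d \<in> V" using assms set_vs nth_mem by blast
  with assms nth_pos[of "vs ! d"] distinct_vs show ?thesis
    by (metis nth_eq_iff_index_eq)
qed

lemma pos_eq_0_iff: "v \<in> V \<Longrightarrow> pos v = 0 \<longleftrightarrow> v = Rv"
  by (cases v) (auto simp: pos_def)

context
  fixes v w x :: vert
  assumes in_V: "v \<in> V" "w \<in> V" "x \<in> V"
    and order: "pos x < pos v" "pos v < pos w"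
    and adjacency: "adj x w" "\<not> adj x v"
begin

lemma four_point_root:
  assumes "adj Rv v" "\<not> adj Rv w"
  shows "\<exists>y\<in>V. pos y < pos x \<and> adj y v \<and> \<not> adj y w"
proof -
  have "x \<noteq> Rv" using assms(1) adjacency(2) by blast
  with in_V(3) have "0 < pos x" using pos_eq_0_iff by blast
  with assms show ?thesis by (intro bexI[of _ Rv]) (auto simp: pos_def)
qed

lemma four_point_Lit:
  assumes "v = Lit j b"
  shows "\<exists>y\<in>V. pos y < pos x \<and> adj y v \<and> \<not> adj y w"
proof (cases "b = \<sigma> j")
  case True
  with assms show ?thesis
    using order adjacency in_V by (cases x) (auto simp: pos_def split: if_splits)
next
  case False
  from assms in_V have "j < k" by simp
  have x: "x = Lit j (\<sigma> j)"
    using assms False order adjacency in_V by (cases x) (auto simp: pos_def split: if_splits)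
  show ?thesis
  proof (cases w)
    case (Lit j' b')
    with assms False order in_V have "j' < j" "b' = (\<not> \<sigma> j')"
      by (auto simp: pos_def split: if_splits)
    with Lit assms x \<open>j < k\<close> show ?thesis
      by (intro bexI[of _ "Lit j' (\<sigma> j')"]) (auto simp: pos_def)
  next
    case (Cv i)
    with assms x \<open>j < k\<close> show ?thesis
      by (intro bexI[of _ Pv]) (auto simp: pos_def)
  next
    case Uv
    with assms \<open>j < k\<close> show ?thesis
      by (intro four_point_root) auto
  qed (use assms order adjacency in_V x in \<open>auto simp: pos_def split: if_splits\<close>)
qed

lemma four_point_Cv_Cv:
  assumes "v = Cv i" "w = Cv i'"
  shows "\<exists>y\<in>V. pos y < pos x \<and> adj y v \<and> \<not> adj y w"
proof -
  from in_V assms order have "i < l" "i' < l" "clause_rank i < clause_rank i'"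
    by (auto simp: pos_def)
  from assms order adjacency in_V
  have "pos x < length prefix" "adj (prefix ! pos x) w" "\<not> adj (prefix ! pos x) v"
    using nth_pos[of x] nth_vs_prefix[of "pos x"] by (cases x; auto simp: pos_def split: if_splits)+
  with \<open>i < l\<close> \<open>i' < l\<close> \<open>clause_rank i < clause_rank i'\<close> assms
  obtain d where "d < pos x" "adj (prefix ! d) v" "\<not> adj (prefix ! d) w"
    using earlier_literal_if_earlier_clause by blast
  moreover have "prefix ! d = vs ! d" "d < length vs"
    using \<open>d < pos x\<close> \<open>pos x < length prefix\<close> nth_vs_prefix length_vs by auto
  ultimately show ?thesis
    using pos_nth[of d] by (intro bexI[of _ "prefix ! d"]) auto
qed

lemma four_point_Cv:
  assumes "v = Cv i"
  shows "\<exists>y\<in>V. pos y < pos x \<and> adj y v \<and> \<not> adj y w"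
proof -
  from assms in_V have "i < l" by simp
  show ?thesis
  proof (cases w)
    case (Cv i')
    with assms show ?thesis by (rule four_point_Cv_Cv)
  next
    case (Av i')
    obtain j where "j < k" "adj (Lit j (\<sigma> j)) (Cv i)"
      using clause_has_true_literal \<open>i < l\<close> by blast
    moreover have "2 + k \<le> pos x"
      using Av assms adjacency in_V by (cases x) (auto simp: pos_def)
    ultimately show ?thesis
      using Av assms by (intro bexI[of _ "Lit j (\<sigma> j)"]) (auto simp: pos_def)
  next
    case Uv
    with assms \<open>i < l\<close> show ?thesis by (intro four_point_root) auto
  next
    case (Tv i')
    with assms \<open>i < l\<close> show ?thesis by (intro four_point_root) auto
  qed (use assms order in_V in \<open>auto simp: pos_def split: if_splits dest: clause_rank(1)\<close>)
qed

lemma four_point_Av: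
  assumes "v = Av i"
  shows "\<exists>y\<in>V. pos y < pos x \<and> adj y v \<and> \<not> adj y w"
proof -
  from assms in_V have "i < l" by simp
  show ?thesis
  proof (cases w)
    case (Av i')
    with in_V assms order have "clause_rank i < clause_rank i'"
      by (auto simp: pos_def)
    moreover have "x = Cv i'"
      using Av assms order adjacency in_V by (cases x) (auto simp: pos_def)
    ultimately show ?thesis
      using Av assms \<open>i < l\<close> by (intro bexI[of _ "Cv i"]) (auto simp: pos_def)
  next
    case Uv
    with assms \<open>i < l\<close> show ?thesis by (intro four_point_root) auto
  next
    case (Tv i')
    with assms \<open>i < l\<close> show ?thesis by (intro four_point_root) auto
  qed (use assms order in_V in \<open>auto simp: pos_def split: if_splits dest: clause_rank(1)\<close>)
qed

lemma four_point_Tv: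
  assumes "v = Tv i"
  shows "\<exists>y\<in>V. pos y < pos x \<and> adj y v \<and> \<not> adj y w"
proof -
  from assms in_V order obtain i' where "w = Tv i'" "clause_rank i < clause_rank i'"
    by (cases w) (auto simp: pos_def split: if_splits dest: clause_rank(1))
  moreover from this adjacency have "x = Av i' \<or> x = Cv i'"
    by (cases x) auto
  ultimately show ?thesis
    using assms in_V by (intro bexI[of _ "Cv i"]) (auto simp: pos_def)
qed

lemma four_point: "\<exists>y\<in>V. pos y < pos x \<and> adj y v \<and> \<not> adj y w"
proof (cases v)
  case Rv
  then show ?thesis using order by (simp add: pos_def)
next
  case Pv
  then show ?thesis using order adjacency in_V by (cases x) (auto simp: pos_def)
next
  case Qv
  then show ?thesis using order adjacency in_V by (cases x) (auto simp: pos_def split: if_splits)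
next
  case Uv
  then show ?thesis using order adjacency in_V
    by (cases x; cases w) (auto simp: pos_def split: if_splits dest: clause_rank(1))
qed (fact four_point_Lit four_point_Cv four_point_Av four_point_Tv)+

end

lemma tree_parent_leftmost:
  assumes "v \<in> V" "v \<noteq> Rv"
  shows "tree_parent v \<in> V \<and> adj (tree_parent v) v \<and> (\<forall>u\<in>V. adj u v \<longrightarrow> pos (tree_parent v) \<le> pos u)"
proof (cases v)
  case (Tv i)
  have "pos (Cv i) \<le> pos u" if "adj u v" for u
    using that Tv by (cases u) (auto simp: pos_def)
  with Tv assms show ?thesis by auto
next
  case Uv
  then show ?thesis
    using assms pos_eq_0_iff by (fastforce simp: pos_def)
qed (use assms in \<open>auto simp: pos_def\<close>)

theorem is_lbfs_vs: "is_lbfs V adj vs"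
proof (rule is_lbfs_if_four_point[OF distinct_vs set_vs])
  show "vs \<noteq> []" by (simp add: vs_def prefix_def)
next
  fix a b c
  assume "a < b" "b < c" "c < length vs" "adj (vs ! a) (vs ! c)" "\<not> adj (vs ! a) (vs ! b)"
  with pos_nth[of a] pos_nth[of b] pos_nth[of c]
  obtain y where "y \<in> V" "pos y < a" "adj y (vs ! b)" "\<not> adj y (vs ! c)"
    using four_point[of "vs ! b" "vs ! c" "vs ! a"] by auto
  with nth_pos[of y] show "\<exists>d<a. adj (vs ! d) (vs ! b) \<and> \<not> adj (vs ! d) (vs ! c)"
    by (intro exI[of _ "pos y"]) auto
qed

lemma leftmost_neighbour_is_tree_parent:
  assumes "0 < j" "j < length vs"
  shows "\<exists>i<length vs. vs ! i = tree_parent (vs ! j) \<and> adj (vs ! i) (vs ! j) \<and>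
    (\<forall>i'<i. \<not> adj (vs ! i') (vs ! j))"
proof -
  have v: "vs ! j \<in> V" "pos (vs ! j) = j" using pos_nth[OF assms(2)] by auto
  with assms(1) have "vs ! j \<noteq> Rv" by (auto simp: pos_def)
  with v(1) have parent: "tree_parent (vs ! j) \<in> V" "adj (tree_parent (vs ! j)) (vs ! j)"
    "\<forall>u\<in>V. adj u (vs ! j) \<longrightarrow> pos (tree_parent (vs ! j)) \<le> pos u"
    using tree_parent_leftmost by blast+
  have "\<not> adj (vs ! i) (vs ! j)" if "i < pos (tree_parent (vs ! j))" for i
  proof
    assume "adj (vs ! i) (vs ! j)"
    moreover have "i < length vs"
      using that nth_pos[OF parent(1)] by linarith
    ultimately show False
      using that parent(3) pos_nth[of i] by fastforce
  qed
  with parent(1,2) nth_pos[OF parent(1)] show ?thesis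
    by (intro exI[of _ "pos (tree_parent (vs ! j))"]) auto
qed

lemma image_nth_vs_tail: "(!) vs ` {0<..<length vs} = V - {Rv}"
proof (intro equalityI subsetI)
  fix v assume "v \<in> (!) vs ` {0<..<length vs}"
  then obtain j where "v = vs ! j" "0 < j" "j < length vs" by auto
  with pos_nth[of j] pos_eq_0_iff[of v] show "v \<in> V - {Rv}" by auto
next
  fix v assume "v \<in> V - {Rv}"
  with nth_pos[of v] pos_eq_0_iff[of v] show "v \<in> (!) vs ` {0<..<length vs}"
    by (intro image_eqI[of _ _ "pos v"]) auto
qed

theorem F_tree_vs: "F_tree adj vs = T_edges k cls"
proof -
  have "F_tree adj vs = (\<lambda>j. {vs ! j, tree_parent (vs ! j)}) ` {0<..<length vs}"
    using leftmost_neighbour_is_tree_parent by (rule F_tree_eq_parent_edges)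
  also have "\<dots> = (\<lambda>v. {v, tree_parent v}) ` (V - {Rv})"
    by (simp add: image_image flip: image_nth_vs_tail)
  finally show ?thesis
    using image_tree_parent_edges by simp
qed

end

theorem lemma6:
  fixes k :: nat and cls :: "literal list list"
  assumes "sat3_instance k cls"
    and "satisfiable k cls"
  shows "\<exists>vs. is_lbfs (G_verts k cls) (G_adj k cls) vs
              \<and> F_tree (G_adj k cls) vs = T_edges k cls"
proof -
  obtain \<sigma> where "satisfies \<sigma> cls"
    using assms(2) unfolding satisfiable_def by blast
  with assms(1) interpret satisfied_instance k cls \<sigma>
    by unfold_locales
  show ?thesis
    using is_lbfs_vs F_tree_vs by auto
qed

end
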